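(* Let $T$ be a rooted binary phylogenetic tree with root of out-degree 2 and leaf set $X$, $|X|\ge3$, under the $N_2$ model. Let $y,z$ be a cherry with parent $w$, $p_y,p_z$ the substitution probabilities of $(w,y),(w,z)$, $\theta=(1-p_y)(1-p_z)+p_yp_z$ and $\pi=p_yp_z/\theta$. Then $$RA_\varphi(T)=\theta\cdot RA_\varphi(T'_\pi)+(1-\theta)\cdot RA_\varphi(T'_{0.5}).$$
   Context: A rooted binary phylogenetic tree is a finite tree with a distinguished root vertex $\rho$, all edges directed away from $\rho$, in which $\rho$ has out-degree 2 (or 1), and every other vertex has in-degree 1 and out-degree 0 or 2; out-degree-0 vertices are leaves. Under the Neyman 2-state model $N_2$, each edge $e$ carries a substitution probability $p_e\in[0,\frac12]$; given the root state, states propagate independently along edges, each edge $(u,v)$ changing state with probability $p_e$; $f$ is the restriction of the states to the leaves. The coin-toss method $\varphi$: leaves get their states $f(x)$; proceeding towards the root, a vertex whose two children have equal states gets that state, otherwise one of the two states chosen by an independent fair coin toss; a vertex with a single child gets its child's state. $RA_\varphi(T)$ is the probability that the state assigned to the root equals the true root state. Vertices of in- and out-degree 1 may be suppressed (merging consecutive edges with substitution probabilities $a,b$ into one with probability $a+b-2ab$). For $q\in[0,\frac12]$, $T'_q$ is obtained from $T$ by deleting the leaves $y,z$ and their incident edges, attaching a new leaf $w'$ to $w$ via an edge with substitution probability $q$, and suppressing $w$; in particular $T'_{0.5}$ is $T'_q$ with $q=\frac12$. *)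

theory Defs
  imports "HOL-Probability.Probability_Mass_Function"
begin

text \<open>Every vertex stores the substitution probability of the edge entering it
  (the value stored at the root is unused). Leaves are unlabelled: the
  reconstruction accuracy does not depend on the labels.\<close>

datatype ptree = Leaf real | Node real ptree ptree

fun inc :: "ptree \<Rightarrow> real" where
  "inc (Leaf p) = p"
| "inc (Node p l r) = p"

fun nleaves :: "ptree \<Rightarrow> nat" where
  "nleaves (Leaf p) = 1"
| "nleaves (Node p l r) = nleaves l + nleaves r"

fun edges_ok :: "ptree \<Rightarrow> bool" where
  "edges_ok (Leaf p) = True"
| "edges_ok (Node p l r) =
     (0 \<le> inc l \<and> inc l \<le> 1/2 \<and> 0 \<le> inc r \<and> inc r \<le> 1/2 \<and> edges_ok l \<and> edges_ok r)"

text \<open>One-hole contexts, used to locate a cherry inside a tree.\<close>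
datatype ctx = Hole | CL real ctx ptree | CR real ptree ctx

fun plug :: "ctx \<Rightarrow> ptree \<Rightarrow> ptree" where
  "plug Hole t = t"
| "plug (CL p c r) t = Node p (plug c t) r"
| "plug (CR p l c) t = Node p l (plug c t)"

definition edge_pmf :: "real \<Rightarrow> bool \<Rightarrow> bool pmf" where
  "edge_pmf p s = map_pmf (\<lambda>c. if c then \<not> s else s) (bernoulli_pmf p)"

text \<open>N2 model: distribution of the leaf states (listed left to right) of t,
  given the true state at the root of t.\<close>
fun evolve :: "ptree \<Rightarrow> bool \<Rightarrow> bool list pmf" where
  "evolve (Leaf p) s = return_pmf [s]"
| "evolve (Node p l r) s =
     bind_pmf (edge_pmf (inc l) s) (\<lambda>sl.
     bind_pmf (evolve l sl) (\<lambda>fl.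
     bind_pmf (edge_pmf (inc r) s) (\<lambda>sr.
     bind_pmf (evolve r sr) (\<lambda>fr.
     return_pmf (fl @ fr)))))"

text \<open>Coin-toss method: distribution of the state assigned to the root of t
  from the leaf states xs (listed left to right).\<close>
fun coin_toss :: "ptree \<Rightarrow> bool list \<Rightarrow> bool pmf" where
  "coin_toss (Leaf p) xs = return_pmf (hd xs)"
| "coin_toss (Node p l r) xs =
     bind_pmf (coin_toss l (take (nleaves l) xs)) (\<lambda>a.
     bind_pmf (coin_toss r (drop (nleaves l) xs)) (\<lambda>b.
     (if a = b then return_pmf a else bernoulli_pmf (1/2))))"

text \<open>Reconstruction accuracy of the coin-toss method; the root state is
  True with probability r0.\<close>
definition RA :: "real \<Rightarrow> ptree \<Rightarrow> real" where
  "RA r0 T = measure_pmf.prob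
     (bind_pmf (bernoulli_pmf r0) (\<lambda>s.
      bind_pmf (evolve T s) (\<lambda>f.
      bind_pmf (coin_toss T f) (\<lambda>a. return_pmf (a = s))))) {True}"

text \<open>Merging two consecutive edges (suppressing a degree-2 vertex).\<close>
definition merge_prob :: "real \<Rightarrow> real \<Rightarrow> real" where
  "merge_prob a b = a + b - 2 * a * b"

text \<open>T'_q for the tree plug C (Node a (Leaf py) (Leaf pz)) with cherry
  (Leaf py, Leaf pz) and parent w (whose incoming edge has probability a):
  delete the cherry leaves, attach a new leaf w' via an edge of probability q,
  suppress w.\<close>
definition cherry_reduce :: "ctx \<Rightarrow> real \<Rightarrow> real \<Rightarrow> ptree" where
  "cherry_reduce C a q = plug C (Leaf (merge_prob a q))"

end

theory Submission
  imports Defs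
begin

text \<open>The reconstructed root state depends on the subtree below w only through the
  channel "true state at the parent of w \<mapsto> coin-toss state at w", and the whole
  coin-toss computation is affine in this channel. For the cherry the channel is a
  mixture: with probability \<theta> the two leaves agree, and then (by Bayes) they are both
  wrong at w with probability \<pi>, so w behaves like a leaf at distance \<pi>; otherwise
  the coin toss makes w a uniformly random state, i.e. a leaf at distance 1/2.
  Pulling the mixture out of the surrounding context gives the formula.\<close>

lemma bernoulli_pmf_pmf_True: "bernoulli_pmf (pmf p True) = p"
proof (rule pmf_eqI)
  fix x :: bool
  have "pmf p True + pmf p False = 1"
    using sum_pmf_eq_1[of UNIV p] by (auto simp: UNIV_bool add.commute)
  then show "pmf (bernoulli_pmf (pmf p True)) x = pmf p x"
    using pmf_nonneg[of p True] pmf_nonneg[of p False] pmf_le_1[of p True]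
    by (cases x) auto
qed

lemma bool_pmf_eqI: "pmf p True = pmf q True \<Longrightarrow> p = (q :: bool pmf)"
  by (metis bernoulli_pmf_pmf_True)

lemma pmf_bind_bernoulli:
  "0 \<le> q \<Longrightarrow> q \<le> 1 \<Longrightarrow>
   pmf (bind_pmf (bernoulli_pmf q) f) x = pmf (f True) x * q + pmf (f False) x * (1 - q)"
  by (simp add: pmf_bind)

lemma bind_pmf_commute_nested:
  "bind_pmf A (\<lambda>x. bind_pmf (B x) (\<lambda>y. bind_pmf C (F x y)))
   = bind_pmf C (\<lambda>z. bind_pmf A (\<lambda>x. bind_pmf (B x) (\<lambda>y. F x y z)))"
proof -
  have "bind_pmf A (\<lambda>x. bind_pmf (B x) (\<lambda>y. bind_pmf C (F x y)))
      = bind_pmf A (\<lambda>x. bind_pmf C (\<lambda>z. bind_pmf (B x) (\<lambda>y. F x y z)))"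
    by (simp add: bind_commute_pmf[of "B _" C])
  also have "\<dots> = bind_pmf C (\<lambda>z. bind_pmf A (\<lambda>x. bind_pmf (B x) (\<lambda>y. F x y z)))"
    by (rule bind_commute_pmf)
  finally show ?thesis .
qed

lemma edge_pmf_eq_bernoulli:
  "0 \<le> p \<Longrightarrow> p \<le> 1 \<Longrightarrow> edge_pmf p s = bernoulli_pmf (if s then 1 - p else p)"
  by (rule bool_pmf_eqI) (simp add: edge_pmf_def map_pmf_def pmf_bind_bernoulli)

lemma merge_prob_bounds:
  assumes "0 \<le> a" "a \<le> 1" "0 \<le> q" "q \<le> 1"
  shows "0 \<le> merge_prob a q" "merge_prob a q \<le> 1"
proof -
  have "merge_prob a q = a * (1 - q) + q * (1 - a)"
    "merge_prob a q = 1 - ((1 - a) * (1 - q) + q * a)"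
    by (simp_all add: merge_prob_def algebra_simps)
  with assms show "0 \<le> merge_prob a q" "merge_prob a q \<le> 1"
    by (smt (verit) mult_nonneg_nonneg)+
qed

lemma edge_pmf_merge:
  assumes "0 \<le> a" "a \<le> 1" "0 \<le> q" "q \<le> 1"
  shows "bind_pmf (edge_pmf a s) (edge_pmf q) = edge_pmf (merge_prob a q) s"
  using assms merge_prob_bounds[OF assms]
  by (intro bool_pmf_eqI, cases s)
     (simp_all add: edge_pmf_eq_bernoulli pmf_bind_bernoulli merge_prob_def algebra_simps)

definition coin_join :: "bool \<Rightarrow> bool \<Rightarrow> bool pmf" where
  "coin_join a b = (if a = b then return_pmf a else bernoulli_pmf (1/2))"

lemma coin_join_eta: "coin_join a = (\<lambda>b. if a = b then return_pmf a else bernoulli_pmf (1/2))"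
  by (rule ext) (simp add: coin_join_def)

lemma cherry_weight_bounds:
  fixes py pz \<theta> :: real
  assumes "0 \<le> py" "py \<le> 1/2" "0 \<le> pz" "pz \<le> 1/2"
    and \<theta>: "\<theta> = (1 - py) * (1 - pz) + py * pz"
  shows "1/2 \<le> \<theta>" "\<theta> \<le> 1" "0 \<le> py * pz / \<theta>" "py * pz / \<theta> \<le> 1"
proof -
  have "\<theta> = 1/2 + 2 * ((1/2 - py) * (1/2 - pz))"
    unfolding \<theta> by (simp add: algebra_simps)
  then show \<theta>_ge: "1/2 \<le> \<theta>"
    using assms(1-4) mult_nonneg_nonneg[of "1/2 - py" "1/2 - pz"] by linarith
  have "\<theta> = 1 - (py * (1 - pz) + pz * (1 - py))"
    unfolding \<theta> by (simp add: algebra_simps)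
  then show "\<theta> \<le> 1"
    using assms(1-4) mult_nonneg_nonneg[of py "1 - pz"] mult_nonneg_nonneg[of pz "1 - py"]
    by linarith
  show "0 \<le> py * pz / \<theta>" "py * pz / \<theta> \<le> 1"
    using assms \<theta>_ge by (simp_all add: divide_le_eq_1 mult_nonneg_nonneg)
qed

lemma cherry_coin_join_mixture:
  assumes "0 \<le> py" "py \<le> 1/2" "0 \<le> pz" "pz \<le> 1/2"
    and \<theta>: "\<theta> = (1 - py) * (1 - pz) + py * pz" and \<pi>: "\<pi> = py * pz / \<theta>"
  shows "bind_pmf (edge_pmf py w) (\<lambda>y. bind_pmf (edge_pmf pz w) (coin_join y))
       = bind_pmf (bernoulli_pmf \<theta>) (\<lambda>x. edge_pmf (if x then \<pi> else 1/2) w)"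
proof -
  have "0 \<le> \<pi>" "\<pi> \<le> 1" "1/2 \<le> \<theta>" "\<theta> \<le> 1"
    using cherry_weight_bounds[OF assms(1-5)] \<pi> by simp_all
  with assms show ?thesis
    by (intro bool_pmf_eqI, cases w)
     (simp_all add: edge_pmf_eq_bernoulli pmf_bind_bernoulli coin_join_def field_simps)
qed

definition reconstruct :: "ptree \<Rightarrow> bool \<Rightarrow> bool pmf" where
  "reconstruct t s = bind_pmf (evolve t s) (coin_toss t)"

definition reconstruct_edge :: "ptree \<Rightarrow> bool \<Rightarrow> bool pmf" where
  "reconstruct_edge t s = bind_pmf (edge_pmf (inc t) s) (reconstruct t)"

lemma length_evolve: "f \<in> set_pmf (evolve t s) \<Longrightarrow> length f = nleaves t"
  by (induction t arbitrary: s f) auto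

lemma reconstruct_edge_Leaf: "reconstruct_edge (Leaf p) = edge_pmf p"
proof -
  have "reconstruct (Leaf p) = return_pmf"
    by (rule ext) (simp add: reconstruct_def bind_return_pmf)
  then show ?thesis
    unfolding reconstruct_edge_def by (simp add: bind_return_pmf')
qed

lemma reconstruct_Node:
  "reconstruct (Node p l r) s =
     bind_pmf (reconstruct_edge l s) (\<lambda>a. bind_pmf (reconstruct_edge r s) (coin_join a))"
proof -
  let ?El = "edge_pmf (inc l) s" and ?Er = "edge_pmf (inc r) s"
  have "reconstruct (Node p l r) s = bind_pmf ?El (\<lambda>sl. bind_pmf (evolve l sl) (\<lambda>fl.
      bind_pmf ?Er (\<lambda>sr. bind_pmf (evolve r sr) (\<lambda>fr. coin_toss (Node p l r) (fl @ fr)))))"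
    by (simp add: reconstruct_def bind_assoc_pmf bind_return_pmf)
  also have "\<dots> = bind_pmf ?El (\<lambda>sl. bind_pmf (evolve l sl) (\<lambda>fl.
      bind_pmf ?Er (\<lambda>sr. bind_pmf (evolve r sr) (\<lambda>fr.
      bind_pmf (coin_toss l fl) (\<lambda>a. bind_pmf (coin_toss r fr) (coin_join a))))))"
    by (intro bind_pmf_cong refl) (simp add: length_evolve coin_join_eta)
  also have "\<dots> = bind_pmf ?El (\<lambda>sl. bind_pmf (evolve l sl) (\<lambda>fl.
      bind_pmf (coin_toss l fl) (\<lambda>a. bind_pmf ?Er (\<lambda>sr. bind_pmf (evolve r sr) (\<lambda>fr.
      bind_pmf (coin_toss r fr) (coin_join a))))))"
    by (subst bind_pmf_commute_nested) simp
  also have "\<dots> = bind_pmf (reconstruct_edge l s) (\<lambda>a. bind_pmf (reconstruct_edge r s) (coin_join a))"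
    by (simp add: reconstruct_edge_def reconstruct_def bind_assoc_pmf)
  finally show ?thesis .
qed

lemma reconstruct_edge_Node:
  "reconstruct_edge (Node p l r) s = bind_pmf (edge_pmf p s) (\<lambda>s'.
     bind_pmf (reconstruct_edge l s') (\<lambda>a. bind_pmf (reconstruct_edge r s') (coin_join a)))"
  by (simp add: reconstruct_edge_def reconstruct_Node[abs_def])

lemma reconstruct_edge_cherry:
  assumes "0 \<le> a" "a \<le> 1/2" "0 \<le> py" "py \<le> 1/2" "0 \<le> pz" "pz \<le> 1/2"
    and \<theta>: "\<theta> = (1 - py) * (1 - pz) + py * pz" and \<pi>: "\<pi> = py * pz / \<theta>"
  shows "reconstruct_edge (Node a (Leaf py) (Leaf pz)) s = bind_pmf (bernoulli_pmf \<theta>)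
           (\<lambda>x. reconstruct_edge
                  (if x then Leaf (merge_prob a \<pi>) else Leaf (merge_prob a (1/2))) s)"
proof -
  have \<pi>_bounds: "0 \<le> \<pi>" "\<pi> \<le> 1"
    using cherry_weight_bounds[OF assms(3-7)] \<pi> by simp_all
  have "reconstruct_edge (Node a (Leaf py) (Leaf pz)) s = bind_pmf (edge_pmf a s)
      (\<lambda>w. bind_pmf (edge_pmf py w) (\<lambda>y. bind_pmf (edge_pmf pz w) (coin_join y)))"
    by (simp add: reconstruct_edge_Node reconstruct_edge_Leaf)
  also have "\<dots> = bind_pmf (edge_pmf a s)
      (\<lambda>w. bind_pmf (bernoulli_pmf \<theta>) (\<lambda>x. edge_pmf (if x then \<pi> else 1/2) w))"
    by (simp add: cherry_coin_join_mixture[OF assms(3-8)])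
  also have "\<dots> = bind_pmf (bernoulli_pmf \<theta>)
      (\<lambda>x. bind_pmf (edge_pmf a s) (edge_pmf (if x then \<pi> else 1/2)))"
    by (rule bind_commute_pmf)
  also have "\<dots> = bind_pmf (bernoulli_pmf \<theta>) (\<lambda>x. reconstruct_edge
      (if x then Leaf (merge_prob a \<pi>) else Leaf (merge_prob a (1/2))) s)"
    using assms(1,2) \<pi>_bounds
    by (intro bind_pmf_cong refl) (simp add: edge_pmf_merge reconstruct_edge_Leaf)
  finally show ?thesis .
qed

fun ctx_reconstruct_edge :: "ctx \<Rightarrow> (bool \<Rightarrow> bool pmf) \<Rightarrow> bool \<Rightarrow> bool pmf" where
  "ctx_reconstruct_edge Hole h = h"
| "ctx_reconstruct_edge (CL p c r) h = (\<lambda>s. bind_pmf (edge_pmf p s) (\<lambda>s'.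
     bind_pmf (ctx_reconstruct_edge c h s') (\<lambda>a. bind_pmf (reconstruct_edge r s') (coin_join a))))"
| "ctx_reconstruct_edge (CR p l c) h = (\<lambda>s. bind_pmf (edge_pmf p s) (\<lambda>s'.
     bind_pmf (reconstruct_edge l s') (\<lambda>a. bind_pmf (ctx_reconstruct_edge c h s') (coin_join a))))"

fun ctx_reconstruct :: "ctx \<Rightarrow> (bool \<Rightarrow> bool pmf) \<Rightarrow> bool \<Rightarrow> bool pmf" where
  "ctx_reconstruct Hole h = h"
| "ctx_reconstruct (CL p c r) h = (\<lambda>s.
     bind_pmf (ctx_reconstruct_edge c h s) (\<lambda>a. bind_pmf (reconstruct_edge r s) (coin_join a)))"
| "ctx_reconstruct (CR p l c) h = (\<lambda>s.
     bind_pmf (reconstruct_edge l s) (\<lambda>a. bind_pmf (ctx_reconstruct_edge c h s) (coin_join a)))"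

lemma reconstruct_edge_plug: "reconstruct_edge (plug C t) = ctx_reconstruct_edge C (reconstruct_edge t)"
  by (induction C) (auto simp: reconstruct_edge_Node)

lemma reconstruct_plug:
  "C \<noteq> Hole \<Longrightarrow> reconstruct (plug C t) = ctx_reconstruct C (reconstruct_edge t)"
  by (cases C) (auto simp: reconstruct_Node reconstruct_edge_plug)

lemma ctx_reconstruct_edge_bind:
  "ctx_reconstruct_edge C (\<lambda>s. bind_pmf B (\<lambda>x. H x s)) s
   = bind_pmf B (\<lambda>x. ctx_reconstruct_edge C (H x) s)"
proof (induction C arbitrary: s)
  case Hole
  then show ?case by simp
next
  case (CL p c r)
  then show ?case
    by (simp add: bind_assoc_pmf bind_commute_pmf[of "edge_pmf p s" B])
next
  case (CR p l c)
  have "ctx_reconstruct_edge (CR p l c) (\<lambda>s. bind_pmf B (\<lambda>x. H x s)) s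
      = bind_pmf (edge_pmf p s) (\<lambda>s'. bind_pmf (reconstruct_edge l s') (\<lambda>a.
          bind_pmf B (\<lambda>x. bind_pmf (ctx_reconstruct_edge c (H x) s') (coin_join a))))"
    by (simp add: CR bind_assoc_pmf)
  also have "\<dots> = bind_pmf B (\<lambda>x. ctx_reconstruct_edge (CR p l c) (H x) s)"
    by (subst bind_pmf_commute_nested) simp
  finally show ?case .
qed

lemma ctx_reconstruct_bind:
  "ctx_reconstruct C (\<lambda>s. bind_pmf B (\<lambda>x. H x s)) s = bind_pmf B (\<lambda>x. ctx_reconstruct C (H x) s)"
  by (cases C)
     (simp_all add: ctx_reconstruct_edge_bind bind_assoc_pmf bind_commute_pmf[of "reconstruct_edge _ s" B])

lemma edges_ok_plug: "edges_ok (plug C t) \<Longrightarrow> edges_ok t"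
  by (induction C) auto

lemma edges_ok_plug_inc: "edges_ok (plug C t) \<Longrightarrow> C \<noteq> Hole \<Longrightarrow> 0 \<le> inc t \<and> inc t \<le> 1/2"
proof (induction C)
  case (CL p c r)
  then show ?case by (cases "c = Hole") auto
next
  case (CR p l c)
  then show ?case by (cases "c = Hole") auto
qed simp

lemma RA_reconstruct:
  "RA r0 T = pmf (bind_pmf (bernoulli_pmf r0)
                    (\<lambda>s. bind_pmf (reconstruct T s) (\<lambda>a. return_pmf (a = s)))) True"
  by (simp add: RA_def reconstruct_def bind_assoc_pmf measure_pmf_single)

lemma RA_mixture:
  assumes "0 \<le> \<theta>" "\<theta> \<le> 1"
    and mix: "\<And>s. reconstruct T s =
                    bind_pmf (bernoulli_pmf \<theta>) (\<lambda>x. reconstruct (if x then T1 else T2) s)"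
  shows "RA r0 T = \<theta> * RA r0 T1 + (1 - \<theta>) * RA r0 T2"
proof -
  define P where "P T' = bind_pmf (bernoulli_pmf r0)
    (\<lambda>s. bind_pmf (reconstruct T' s) (\<lambda>a. return_pmf (a = s)))" for T'
  have "P T = bind_pmf (bernoulli_pmf r0) (\<lambda>s. bind_pmf (bernoulli_pmf \<theta>) (\<lambda>x.
      bind_pmf (reconstruct (if x then T1 else T2) s) (\<lambda>a. return_pmf (a = s))))"
    by (simp add: P_def mix bind_assoc_pmf)
  also have "\<dots> = bind_pmf (bernoulli_pmf \<theta>) (\<lambda>x. bind_pmf (bernoulli_pmf r0) (\<lambda>s.
      bind_pmf (reconstruct (if x then T1 else T2) s) (\<lambda>a. return_pmf (a = s))))"
    by (rule bind_commute_pmf)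
  also have "\<dots> = bind_pmf (bernoulli_pmf \<theta>) (\<lambda>x. if x then P T1 else P T2)"
    by (intro bind_pmf_cong refl) (auto simp: P_def)
  finally show ?thesis
    using assms(1,2) by (simp add: RA_reconstruct P_def[symmetric] pmf_bind_bernoulli)
qed

lemma RA_plug_mixture:
  assumes "C \<noteq> Hole" "0 \<le> \<theta>" "\<theta> \<le> 1"
    and mix: "\<And>s. reconstruct_edge t s =
                    bind_pmf (bernoulli_pmf \<theta>) (\<lambda>x. reconstruct_edge (if x then t1 else t2) s)"
  shows "RA r0 (plug C t) = \<theta> * RA r0 (plug C t1) + (1 - \<theta>) * RA r0 (plug C t2)"
proof (rule RA_mixture[OF assms(2,3)])
  fix s
  have "reconstruct_edge t =
      (\<lambda>s. bind_pmf (bernoulli_pmf \<theta>) (\<lambda>x. reconstruct_edge (if x then t1 else t2) s))"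
    using mix by (rule ext)
  then have "reconstruct (plug C t) s = ctx_reconstruct C (\<lambda>s. bind_pmf (bernoulli_pmf \<theta>)
      (\<lambda>x. reconstruct_edge (if x then t1 else t2) s)) s"
    using assms(1) by (simp add: reconstruct_plug)
  also have "\<dots> = bind_pmf (bernoulli_pmf \<theta>)
      (\<lambda>x. ctx_reconstruct C (reconstruct_edge (if x then t1 else t2)) s)"
    by (rule ctx_reconstruct_bind)
  also have "\<dots> = bind_pmf (bernoulli_pmf \<theta>)
      (\<lambda>x. reconstruct (plug C (if x then t1 else t2)) s)"
    using assms(1) by (simp add: reconstruct_plug)
  finally show "reconstruct (plug C t) s = bind_pmf (bernoulli_pmf \<theta>)
      (\<lambda>x. reconstruct (if x then plug C t1 else plug C t2) s)"
    by (simp add: if_distrib[of "plug C"])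
qed

theorem theorem4:
  fixes T :: ptree and C :: ctx and a py pz r0 \<theta> \<pi> :: real
  assumes "T = plug C (Node a (Leaf py) (Leaf pz))"
    and "edges_ok T"
    and "nleaves T \<ge> 3"
    and "0 \<le> r0" and "r0 \<le> 1"
    and "\<theta> = (1 - py) * (1 - pz) + py * pz"
    and "\<pi> = py * pz / \<theta>"
  shows "RA r0 T = \<theta> * RA r0 (cherry_reduce C a \<pi>) + (1 - \<theta>) * RA r0 (cherry_reduce C a (1/2))"
proof -
  have C: "C \<noteq> Hole" using assms(1,3) by auto
  have leaves: "0 \<le> py" "py \<le> 1/2" "0 \<le> pz" "pz \<le> 1/2"
    using edges_ok_plug assms(1,2) by fastforce+
  have edge_a: "0 \<le> a" "a \<le> 1/2"
    using edges_ok_plug_inc[OF _ C] assms(1,2) by fastforce+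
  have "0 \<le> \<theta>" "\<theta> \<le> 1" using cherry_weight_bounds[OF leaves assms(6)] by simp_all
  then show ?thesis
    unfolding assms(1) cherry_reduce_def
    by (rule RA_plug_mixture[OF C])
       (simp add: reconstruct_edge_cherry[OF edge_a leaves assms(6,7)])
qed

end
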